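(* Let $\alpha=\ln2/\ln3$ and let $(p_k/q_k)_{k\ge0}$ be the convergents of its simple continued fraction expansion $\alpha=[0;1,1,1,2,2,3,1,5,\ldots]$, indexed so that $p_0/q_0=0/1$, $p_1/q_1=1/1$, $p_2/q_2=1/2$, $p_3/q_3=2/3$, $p_4/q_4=5/8,\ldots$. Then for every odd $k>1$, $$\left|\sum_{i=1}^{p_k}\frac{2^{\lfloor (i-1)/\alpha\rfloor}}{3^i}-\frac{p_k}{6\ln2}\right|<\frac16.$$
   Context: The sum $\sum_{i=1}^{p_k}2^{\lfloor (i-1)/\alpha\rfloor}/3^i$ equals $-\Phi_{\mathbb{R}}(w_k)$, where $w_k$ is the Christoffel word $(\lceil(j+1)p_k/q_k\rceil-\lceil jp_k/q_k\rceil)_{j=0}^{q_k-1}$ (of length $q_k$ and height $p_k$) and $\Phi_{\mathbb{R}}(w)=-\sum_i 2^{d_i}/3^{i+1}$ over the positions $d_i$ of the $1$'s of $w$. *)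

theory Defs
  imports Complex_Main
begin

definition alpha :: real where
  "alpha = ln 2 / ln 3"

fun cf_rem :: "real \<Rightarrow> nat \<Rightarrow> real" where
  "cf_rem x 0 = x"
| "cf_rem x (Suc n) = 1 / (cf_rem x n - of_int \<lfloor>cf_rem x n\<rfloor>)"

definition cf_quot :: "real \<Rightarrow> nat \<Rightarrow> int" where
  "cf_quot x n = \<lfloor>cf_rem x n\<rfloor>"

text \<open>Shifted numerators/denominators: cf_P x n = p_(n-2), cf_Q x n = q_(n-2),
  with p_(-2)=0, p_(-1)=1, q_(-2)=1, q_(-1)=0.\<close>
fun cf_P :: "real \<Rightarrow> nat \<Rightarrow> int" where
  "cf_P x 0 = 0"
| "cf_P x (Suc 0) = 1"
| "cf_P x (Suc (Suc n)) = cf_quot x n * cf_P x (Suc n) + cf_P x n"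

fun cf_Q :: "real \<Rightarrow> nat \<Rightarrow> int" where
  "cf_Q x 0 = 1"
| "cf_Q x (Suc 0) = 0"
| "cf_Q x (Suc (Suc n)) = cf_quot x n * cf_Q x (Suc n) + cf_Q x n"

text \<open>The k-th convergent p_k / q_k (standard indexing, p_0/q_0 = a_0/1).\<close>
definition conv_num :: "real \<Rightarrow> nat \<Rightarrow> int" where
  "conv_num x k = cf_P x (k + 2)"

definition conv_den :: "real \<Rightarrow> nat \<Rightarrow> int" where
  "conv_den x k = cf_Q x (k + 2)"

end

theory Submission
  imports Defs "HOL-Number_Theory.Cong"
begin

text \<open>For a convergent p/q of alpha with odd index, 0 < p - q alpha < 1/q. Put
  \<open>\<delta> = p/alpha - q\<close>; then \<open>j/alpha = (jq + j\<delta>)/p\<close>, so the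
  (j+1)-th summand equals \<open>2 powr (-(r(j) + j\<delta>)/p) / 3\<close> with
  \<open>r(j) = jq mod p\<close>. As j ranges over 0..p-1, the r(j) form a permutation of
  0..p-1 (p and q are coprime) and 0 \<le> j\<delta> < 1. Hence three times the sum lies between
  the geometric sums of \<open>2 powr (-(r+1)/p)\<close> and \<open>2 powr (-r/p)\<close> over r < p.
  These differ by exactly 1/2 and strictly enclose \<open>p/(2 ln 2)\<close>, the integral of
  \<open>2 powr (-s/p)\<close> over [0, p].\<close>

lemma cf_rem_not_rat:
  assumes "x \<notin> \<rat>"
  shows "cf_rem x n \<notin> \<rat>"
proof (induction n)
  case 0
  then show ?case using assms by simp
next
  case (Suc n)
  show ?case
  proof
    assume "cf_rem x (Suc n) \<in> \<rat>"
    then have "of_int \<lfloor>cf_rem x n\<rfloor> + inverse (cf_rem x (Suc n)) \<in> \<rat>"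
      by (intro Rats_add Rats_inverse) auto
    then show False using Suc by simp
  qed
qed

lemma cf_rem_frac_bounds:
  assumes "x \<notin> \<rat>"
  shows "0 < cf_rem x n - of_int \<lfloor>cf_rem x n\<rfloor>" and "cf_rem x n - of_int \<lfloor>cf_rem x n\<rfloor> < 1"
proof -
  have "cf_rem x n \<noteq> of_int \<lfloor>cf_rem x n\<rfloor>"
    using cf_rem_not_rat[OF assms, of n] by (metis Rats_of_int)
  then show "0 < cf_rem x n - of_int \<lfloor>cf_rem x n\<rfloor>"
    using of_int_floor_le[of "cf_rem x n"] by linarith
  show "cf_rem x n - of_int \<lfloor>cf_rem x n\<rfloor> < 1"
    by linarith
qed

lemma cf_rem_Suc_gt_1:
  assumes "x \<notin> \<rat>"
  shows "1 < cf_rem x (Suc n)"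
  using cf_rem_frac_bounds[OF assms, of n] by simp

lemma cf_Q_bounds:
  assumes "x \<notin> \<rat>"
  shows "0 \<le> cf_Q x (Suc n) \<and> 1 \<le> cf_Q x (Suc (Suc n))"
proof (induction n)
  case 0
  then show ?case by simp
next
  case (Suc n)
  have "1 \<le> cf_quot x (Suc n)"
    using cf_rem_Suc_gt_1[OF assms, of n] unfolding cf_quot_def by simp
  with Suc have "1 \<le> cf_quot x (Suc n) * cf_Q x (Suc (Suc n))"
    by (metis mult_mono' mult_1 zero_le_one)
  with Suc show ?case by simp
qed

lemma conv_den_ge_1:
  assumes "x \<notin> \<rat>"
  shows "1 \<le> conv_den x k"
  using cf_Q_bounds[OF assms, of k] unfolding conv_den_def add_2_eq_Suc' by simp

lemma cf_det: "cf_P x (Suc n) * cf_Q x n - cf_P x n * cf_Q x (Suc n) = (-1) ^ n"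
  by (induction n) (simp_all add: algebra_simps)

lemma coprime_conv_num_den: "coprime (conv_num x k) (conv_den x k)"
proof -
  have "gcd (conv_num x k) (conv_den x k) dvd
          conv_num x k * cf_Q x (Suc k) - cf_P x (Suc k) * conv_den x k"
    by (intro dvd_diff dvd_mult dvd_mult2) simp_all
  also have "conv_num x k * cf_Q x (Suc k) - cf_P x (Suc k) * conv_den x k = (-1) ^ Suc k"
    using cf_det[of x "Suc k"] unfolding conv_num_def conv_den_def add_2_eq_Suc' by simp
  finally have "is_unit (gcd (conv_num x k) (conv_den x k))"
    by (rule dvd_unit_imp_unit) simp
  then show ?thesis by (simp add: is_unit_gcd coprime_iff_gcd_eq_1)
qed

lemma cf_repr:
  assumes "x \<notin> \<rat>"
  shows "x = (of_int (cf_P x (Suc n)) * cf_rem x n + of_int (cf_P x n)) /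
             (of_int (cf_Q x (Suc n)) * cf_rem x n + of_int (cf_Q x n))"
proof (induction n)
  case 0
  then show ?case by simp
next
  case (Suc n)
  define y where "y = cf_rem x (Suc n)"
  have "1 < y" unfolding y_def by (rule cf_rem_Suc_gt_1[OF assms])
  have rem: "cf_rem x n = of_int (cf_quot x n) + 1 / y"
    unfolding y_def cf_quot_def by simp
  have shift: "of_int (f (Suc n)) * cf_rem x n + of_int (f n) =
      (of_int (cf_quot x n * f (Suc n) + f n) * y + of_int (f (Suc n))) / y"
    for f :: "nat \<Rightarrow> int"
    unfolding rem using \<open>1 < y\<close> by (simp add: field_simps)
  show ?case
    using Suc \<open>1 < y\<close> unfolding shift[of "cf_P x"] shift[of "cf_Q x"] y_def[symmetric] by simp
qed

lemma conv_den_less_cf_denom: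
  assumes "x \<notin> \<rat>"
  shows "of_int (conv_den x k) < of_int (conv_den x k) * cf_rem x (Suc k) + of_int (cf_Q x (Suc k))"
proof -
  have "1 \<le> real_of_int (conv_den x k)"
    using conv_den_ge_1[OF assms, of k] by linarith
  then have "real_of_int (conv_den x k) * 1 < real_of_int (conv_den x k) * cf_rem x (Suc k)"
    using cf_rem_Suc_gt_1[OF assms, of k] by (intro mult_strict_left_mono) auto
  then show ?thesis
    using cf_Q_bounds[OF assms, of k] by simp
qed

lemma convergent_error:
  assumes "x \<notin> \<rat>"
  shows "of_int (conv_num x k) - of_int (conv_den x k) * x =
           (-1) ^ Suc k / (of_int (conv_den x k) * cf_rem x (Suc k) + of_int (cf_Q x (Suc k)))"
proof -
  define D where "D = of_int (conv_den x k) * cf_rem x (Suc k) + of_int (cf_Q x (Suc k))"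
  have "0 < D"
    using conv_den_less_cf_denom[OF assms, of k] conv_den_ge_1[OF assms, of k] unfolding D_def by linarith
  moreover have "x = (of_int (conv_num x k) * cf_rem x (Suc k) + of_int (cf_P x (Suc k))) / D"
    using cf_repr[OF assms, of "Suc k"] unfolding D_def conv_num_def conv_den_def by simp
  ultimately have xD: "x * D = of_int (conv_num x k) * cf_rem x (Suc k) + of_int (cf_P x (Suc k))"
    by (simp add: field_simps del: cf_rem.simps)
  have "of_int (conv_num x k) - of_int (conv_den x k) * x
      = (of_int (conv_num x k) * D - of_int (conv_den x k) * (x * D)) / D"
    using \<open>0 < D\<close> by (simp add: field_simps)
  also have "of_int (conv_num x k) * D - of_int (conv_den x k) * (x * D)
      = of_int (conv_num x k * cf_Q x (Suc k) - cf_P x (Suc k) * conv_den x k)"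
    unfolding xD unfolding D_def by (simp add: algebra_simps del: cf_rem.simps)
  also have "conv_num x k * cf_Q x (Suc k) - cf_P x (Suc k) * conv_den x k = (-1) ^ Suc k"
    using cf_det[of x "Suc k"] unfolding conv_num_def conv_den_def add_2_eq_Suc' by simp
  finally show ?thesis unfolding D_def by simp
qed

lemma convergent_odd_bounds:
  assumes "x \<notin> \<rat>" and "odd k"
  shows "0 < of_int (conv_num x k) - of_int (conv_den x k) * x"
    and "of_int (conv_den x k) * (of_int (conv_num x k) - of_int (conv_den x k) * x) < 1"
proof -
  define D where "D = of_int (conv_den x k) * cf_rem x (Suc k) + of_int (cf_Q x (Suc k))"
  have err: "of_int (conv_num x k) - of_int (conv_den x k) * x = 1 / D"
    using convergent_error[OF assms(1), of k] assms(2) unfolding D_def by simp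
  have "1 \<le> real_of_int (conv_den x k)"
    using conv_den_ge_1[OF assms(1), of k] by linarith
  moreover have "real_of_int (conv_den x k) < D"
    using conv_den_less_cf_denom[OF assms(1), of k] unfolding D_def .
  ultimately show "0 < of_int (conv_num x k) - of_int (conv_den x k) * x"
    and "of_int (conv_den x k) * (of_int (conv_num x k) - of_int (conv_den x k) * x) < 1"
    unfolding err by simp_all
qed

lemma alpha_pos: "0 < alpha"
  unfolding alpha_def by simp

lemma alpha_not_rat: "alpha \<notin> \<rat>"
proof
  assume "alpha \<in> \<rat>"
  then obtain a b :: nat where "b > 0" and "\<bar>alpha\<bar> = real a / real b"
    by (metis Rats_abs_nat_div_natE gr0I)
  then have "real b * ln 2 = real a * ln 3"
    using alpha_pos unfolding alpha_def by (simp add: field_simps)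
  then have "ln (2 ^ b) = ln ((3::real) ^ a)"
    by (simp add: ln_realpow)
  then have "(2::nat) ^ b = 3 ^ a"
    by (metis exp_ln_iff of_nat_eq_of_nat_power_cancel_iff of_nat_numeral zero_less_numeral zero_less_power)
  then have "even ((3::nat) ^ a)"
    using \<open>b > 0\<close> by (metis dvd_power even_numeral)
  then show False by simp
qed

lemma add_one_less_exp:
  fixes x :: real
  assumes "x \<noteq> 0"
  shows "1 + x < exp x"
proof (cases "1 + x \<le> 0")
  case True
  then show ?thesis using exp_gt_zero[of x] by linarith
next
  case False
  have "(1 + x / 2) ^ 2 \<le> exp (x / 2) ^ 2"
    using False exp_ge_add_one_self[of "x / 2"] by (intro power_mono) auto
  also have "exp (x / 2) ^ 2 = exp x"
    by (simp add: exp_double[symmetric])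
  finally have "1 + x + x ^ 2 / 4 \<le> exp x"
    by (simp add: power2_eq_square algebra_simps)
  moreover have "0 < x ^ 2" using assms by simp
  ultimately show ?thesis by linarith
qed

lemma sum_exp_neg_bounds:
  fixes t :: real
  assumes "0 < t" and "0 < p"
  shows "(\<Sum>r<p. exp (- (real (Suc r) * t))) < (1 - exp (- (real p * t))) / t"
    and "(1 - exp (- (real p * t))) / t < (\<Sum>r<p. exp (- (real r * t)))"
proof -
  define c where "c = exp (- t)"
  have c: "0 < c" "c < 1" using assms(1) unfolding c_def by auto
  have pow: "exp (- (real r * t)) = c ^ r" for r
    unfolding c_def by (simp add: exp_of_nat_mult[symmetric])
  have geom: "(\<Sum>r<p. c ^ r) = (1 - c ^ p) / (1 - c)"
    using c by (simp add: sum_gp_strict)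
  have "c ^ p < 1"
    using power_strict_decreasing[of 0 p c] c assms(2) by simp
  then have cp: "0 < 1 - c ^ p" by simp
  have "1 - t < c"
    using add_one_less_exp[of "- t"] assms(1) unfolding c_def by simp
  then have "(1 - c ^ p) * (1 - c) < (1 - c ^ p) * t"
    using cp by (intro mult_strict_left_mono) auto
  then show "(1 - exp (- (real p * t))) / t < (\<Sum>r<p. exp (- (real r * t)))"
    unfolding pow geom using c assms(1) by (simp add: divide_simps)
  have "c * (1 + t) < c * exp t"
    using add_one_less_exp[of t] assms(1) c by simp
  also have "c * exp t = 1"
    unfolding c_def by (simp add: exp_minus)
  finally have "(1 - c ^ p) * (c * t) < (1 - c ^ p) * (1 - c)"
    using cp by (intro mult_strict_left_mono) (auto simp: algebra_simps)
  then show "(\<Sum>r<p. exp (- (real (Suc r) * t))) < (1 - exp (- (real p * t))) / t"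
    unfolding pow power_Suc sum_distrib_left[symmetric] geom using c assms(1)
    by (simp add: divide_simps, simp add: ac_simps)
qed

lemma sum_bij_shift_bounds:
  fixes g :: "real \<Rightarrow> real" and \<sigma> :: "nat \<Rightarrow> nat" and \<theta> :: "nat \<Rightarrow> real"
  assumes \<sigma>: "bij_betw \<sigma> {..<p} {..<p}"
    and g: "\<And>a b. a < b \<Longrightarrow> g b < g a"
    and \<theta>: "\<And>j. j < p \<Longrightarrow> 0 \<le> \<theta> j \<and> \<theta> j < 1"
    and "0 < p"
  shows "(\<Sum>r<p. g (real (Suc r))) < (\<Sum>j<p. g (real (\<sigma> j) + \<theta> j))"
    and "(\<Sum>j<p. g (real (\<sigma> j) + \<theta> j)) \<le> (\<Sum>r<p. g (real r))"
proof -
  have "(\<Sum>r<p. g (real (Suc r))) = (\<Sum>j<p. g (real (Suc (\<sigma> j))))"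
    using sum.reindex_bij_betw[OF \<sigma>, of "\<lambda>r. g (real (Suc r))"] by simp
  also have "\<dots> < (\<Sum>j<p. g (real (\<sigma> j) + \<theta> j))"
    using \<theta> g \<open>0 < p\<close> by (intro sum_strict_mono) auto
  finally show "(\<Sum>r<p. g (real (Suc r))) < (\<Sum>j<p. g (real (\<sigma> j) + \<theta> j))" .
  have "(\<Sum>j<p. g (real (\<sigma> j) + \<theta> j)) \<le> (\<Sum>j<p. g (real (\<sigma> j)))"
  proof (intro sum_mono)
    fix j assume "j \<in> {..<p}"
    then have "\<theta> j = 0 \<or> 0 < \<theta> j" using \<theta> by force
    then show "g (real (\<sigma> j) + \<theta> j) \<le> g (real (\<sigma> j))"
      using g[of "real (\<sigma> j)" "real (\<sigma> j) + \<theta> j"] by auto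
  qed
  also have "\<dots> = (\<Sum>r<p. g (real r))"
    by (rule sum.reindex_bij_betw[OF \<sigma>])
  finally show "(\<Sum>j<p. g (real (\<sigma> j) + \<theta> j)) \<le> (\<Sum>r<p. g (real r))" .
qed

lemma bij_betw_mult_mod:
  fixes p q :: nat
  assumes "coprime p q"
  shows "bij_betw (\<lambda>j. j * q mod p) {..<p} {..<p}"
proof (cases "p = 0")
  case True
  then show ?thesis by (simp add: bij_betw_def)
next
  case False
  have inj: "inj_on (\<lambda>j. j * q mod p) {..<p}"
  proof (rule inj_onI)
    fix a b
    assume "a \<in> {..<p}" "b \<in> {..<p}" and "a * q mod p = b * q mod p"
    then have "[a = b] (mod p)"
      using assms by (simp add: cong_def [symmetric] cong_mult_rcancel_nat coprime_commute)
    with \<open>a \<in> {..<p}\<close> \<open>b \<in> {..<p}\<close> show "a = b"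
      by (simp add: cong_def)
  qed
  moreover have "(\<lambda>j. j * q mod p) ` {..<p} \<subseteq> {..<p}"
    using False by auto
  ultimately show ?thesis
    by (simp add: bij_betw_def card_image card_subset_eq)
qed

lemma floor_of_nat_add_divide:
  fixes d :: real
  assumes "0 \<le> d" and "d < 1"
  shows "\<lfloor>(real n + d) / real p\<rfloor> = int (n div p)"
proof (cases "p = 0")
  case True
  then show ?thesis by simp
next
  case False
  have "n mod p < p"
    using False by simp
  then have "n div p * p \<le> n" and "n + 1 \<le> n div p * p + p"
    using div_mult_mod_eq[of n p] by linarith+
  then have "real (n div p) * real p \<le> real n" and "real n + 1 \<le> real (n div p) * real p + real p"
    by (metis of_nat_le_iff of_nat_mult, metis of_nat_le_iff of_nat_mult of_nat_add of_nat_1)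
  then show ?thesis
    using assms False by (intro floor_unique) (simp_all add: field_simps)
qed

lemma approximation_excess_bounds:
  fixes x :: real and p q j :: nat
  assumes "0 < x" and "0 < q" and "0 < real p - real q * x"
    and "real q * (real p - real q * x) < 1" and "j < p"
  shows "0 \<le> real j * (real p / x - real q)" and "real j * (real p / x - real q) < 1"
proof -
  have excess: "real p / x - real q = (real p - real q * x) / x"
    using assms(1) by (simp add: field_simps)
  then show "0 \<le> real j * (real p / x - real q)"
    using assms(1,3) by simp
  have "real p - real q * x \<le> real q * (real p - real q * x)"
    using assms(2,3) by (simp add: mult_le_cancel_right1)
  then have "real j < real q * x"
    using assms(4,5) by linarith
  then have "real j * (real p / x - real q) < real q * x * ((real p - real q * x) / x)"
    unfolding excess using assms(1,3) by (intro mult_strict_right_mono) auto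
  also have "\<dots> < 1"
    using assms(1,4) by simp
  finally show "real j * (real p / x - real q) < 1" .
qed

lemma pow2_floor_div_alpha:
  fixes p q j :: nat
  defines "\<delta> \<equiv> real p / alpha - real q"
  assumes "0 < p" and "0 \<le> real j * \<delta>" and "real j * \<delta> < 1"
  shows "2 ^ nat \<lfloor>real j / alpha\<rfloor> / 3 ^ Suc j
           = exp (- ((real (j * q mod p) + real j * \<delta>) * (ln 2 / real p))) / (3::real)"
proof -
  define m where "m = j * q div p"
  have ja: "real j / alpha = (real (j * q) + real j * \<delta>) / real p"
    using assms(2) alpha_pos unfolding \<delta>_def by (simp add: field_simps)
  have "\<lfloor>real j / alpha\<rfloor> = int m"
    unfolding ja m_def by (rule floor_of_nat_add_divide) fact+
  then have two: "(2::real) ^ nat \<lfloor>real j / alpha\<rfloor> = exp (real m * ln 2)"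
    by (simp add: exp_of_nat_mult)
  have three: "(3::real) ^ j = exp (real j / alpha * ln 2)"
    using exp_of_nat_mult[of j "ln (3::real)"] unfolding alpha_def by simp
  have "real (j * q) = real p * real m + real (j * q mod p)"
    unfolding m_def by (metis div_mult_mod_eq mult.commute of_nat_add of_nat_mult)
  then have "real m * ln 2 - real j / alpha * ln 2
      = - ((real (j * q mod p) + real j * \<delta>) * (ln 2 / real p))"
    unfolding ja using assms(2) by (simp add: field_simps)
  moreover have "2 ^ nat \<lfloor>real j / alpha\<rfloor> / 3 ^ Suc j
      = exp (real m * ln 2 - real j / alpha * ln 2) / (3::real)"
    unfolding two by (simp add: three exp_diff)
  ultimately show ?thesis by simp
qed

lemma sum_pow2_floor_div_alpha_bound:
  fixes p q :: nat
  assumes "coprime p q" and "0 < p" and "0 < q"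
    and "0 < real p - real q * alpha" and "real q * (real p - real q * alpha) < 1"
  shows "\<bar>(\<Sum>i = 1..p. (2::real) ^ nat \<lfloor>real (i - 1) / alpha\<rfloor> / 3 ^ i)
           - real p / (6 * ln 2)\<bar> < 1 / 6"
proof -
  define t where "t = ln 2 / real p"
  define \<delta> where "\<delta> = real p / alpha - real q"
  define g where "g = (\<lambda>s. exp (- (s * t)))"
  define X where "X = (\<Sum>j<p. g (real (j * q mod p) + real j * \<delta>))"
  have t: "0 < t" "real p * t = ln 2"
    using \<open>0 < p\<close> unfolding t_def by auto
  have \<delta>: "0 \<le> real j * \<delta> \<and> real j * \<delta> < 1" if "j < p" for j
    using approximation_excess_bounds[OF alpha_pos assms(3-5) that] unfolding \<delta>_def by simp
  have "(\<Sum>i = 1..p. (2::real) ^ nat \<lfloor>real (i - 1) / alpha\<rfloor> / 3 ^ i)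
      = (\<Sum>j<p. 2 ^ nat \<lfloor>real j / alpha\<rfloor> / 3 ^ Suc j)"
    by (simp add: sum.atLeast1_atMost_eq)
  also have "\<dots> = X / 3"
    unfolding X_def g_def t_def \<delta>_def sum_divide_distrib
    using pow2_floor_div_alpha[OF \<open>0 < p\<close>] \<delta> unfolding \<delta>_def by (intro sum.cong) auto
  finally have sum_X: "(\<Sum>i = 1..p. (2::real) ^ nat \<lfloor>real (i - 1) / alpha\<rfloor> / 3 ^ i) = X / 3" .
  have g_decreasing: "g b < g a" if "a < b" for a b
    unfolding g_def using t(1) that by simp
  have lower: "(\<Sum>r<p. g (real (Suc r))) < X" and upper: "X \<le> (\<Sum>r<p. g (real r))"
    using sum_bij_shift_bounds[OF bij_betw_mult_mod[OF assms(1)] g_decreasing \<delta> \<open>0 < p\<close>]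
    unfolding X_def by auto
  have gap: "(\<Sum>r<p. g (real r)) - (\<Sum>r<p. g (real (Suc r))) = 1 / 2"
    using sum_lessThan_telescope'[of "\<lambda>r. g (real r)" p] t(2)
    by (simp add: g_def sum_subtractf exp_minus)
  have "(1 - exp (- (real p * t))) / t = real p / (2 * ln 2)"
    using t \<open>0 < p\<close> unfolding t_def by (simp add: exp_minus)
  then have "(\<Sum>r<p. g (real (Suc r))) < real p / (2 * ln 2)"
    and "real p / (2 * ln 2) < (\<Sum>r<p. g (real r))"
    using sum_exp_neg_bounds[OF t(1) \<open>0 < p\<close>] unfolding g_def by auto
  then have "\<bar>X - real p / (2 * ln 2)\<bar> < 1 / 2"
    using lower upper gap by linarith
  then show ?thesis
    unfolding sum_X by (simp add: field_simps)
qed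

theorem lemma49:
  fixes k :: nat
  assumes "odd k" and "k > 1"
  shows "\<bar>(\<Sum>i = 1..nat (conv_num alpha k).
            (2::real) ^ nat \<lfloor>real (i - 1) / alpha\<rfloor> / 3 ^ i)
          - real_of_int (conv_num alpha k) / (6 * ln 2)\<bar> < 1 / 6"
proof -
  define p where "p = nat (conv_num alpha k)"
  define q where "q = nat (conv_den alpha k)"
  have q: "real q = of_int (conv_den alpha k)" "0 < q"
    using conv_den_ge_1[OF alpha_not_rat, of k] unfolding q_def by auto
  have "0 < real_of_int (conv_den alpha k) * alpha"
    using q alpha_pos by simp
  then have "0 < conv_num alpha k"
    using convergent_odd_bounds(1)[OF alpha_not_rat assms(1)] by linarith
  then have p: "real p = of_int (conv_num alpha k)" "0 < p"
    unfolding p_def by auto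
  have "coprime p q"
    using coprime_conv_num_den[of alpha k] \<open>0 < conv_num alpha k\<close> q(2)
    unfolding p_def q_def by (simp add: coprime_int_iff[symmetric])
  moreover have "0 < real p - real q * alpha" and "real q * (real p - real q * alpha) < 1"
    using convergent_odd_bounds[OF alpha_not_rat assms(1)] p(1) q(1) by simp_all
  ultimately show ?thesis
    using sum_pow2_floor_div_alpha_bound[OF _ p(2) q(2)] unfolding p(1) p_def[symmetric] by blast
qed

end
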